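(* Let $D\ge 2$ be an even integer and let $\mathcal{S}=\{\mathcal{S}(0),\ldots,\mathcal{S}(D-1)\}$ be the $D$-PSK constellation with $\mathcal{S}(\ell)=\exp\!\left(j\pi\frac{2\ell+1}{D}\right)$. Let $P>0$, $\sigma_g^2>0$, $N_0>0$, and let $g\sim\mathcal{CN}(0,\sigma_g^2)$, $n_1\sim\mathcal{CN}(0,N_0)$, $n_t\sim\mathcal{CN}(0,N_0)$ and $s_t$ (uniformly distributed on $\mathcal{S}$) be mutually independent. Define $$\tilde{s}_t=\frac{\sqrt{P}\,g\,s_t+n_t}{\sqrt{P}\,g+n_1},\qquad \hat{s}_t=\arg\min_{s\in\mathcal{S}}|s-\tilde{s}_t|^2,\qquad \xi_t=1-s_t\hat{s}_t^*,$$ and for $d=0,\ldots,D-1$ let $p_d=\mathbb{P}[\hat{s}_t=\mathcal{S}(d)\mid s_t=\mathcal{S}(0)]$. Then, with $\mu_\xi=\mathbb{E}[\xi_t]$, $\mu_{\xi^2}=\mathbb{E}[\xi_t^2]$ and $\mu_{|\xi|^2}=\mathbb{E}[|\xi_t|^2]$, $$\mu_\xi = 1 - p_{0} + p_{D/2} - 2\sum_{d=1}^{D/2-1}p_{d}\cos\!\left(\frac{2\pi d}{D}\right),$$ $$\mu_{\xi^2} = 1 - p_{0} + 3p_{D/2} + 2\sum_{d=1}^{D/2 - 1}p_{d} \left[\cos\!\left(\frac{4\pi d}{D}\right) - 2\cos\!\left(\frac{2\pi d}{D}\right)\right],$$ $$\mu_{|\xi|^2} = 4p_{D/2} + 4\sum_{d=1}^{D/2-1}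 p_{d} \left[1-\cos \!\left(\frac{2\pi d}{D}\right)\right].$$
   Context: $\mathcal{CN}(0,\sigma^2)$ denotes a circularly-symmetric complex Gaussian random variable with variance $\sigma^2$; $j$ is the imaginary unit and $(\cdot)^*$ denotes complex conjugation. This models a single sensing RIS element that estimates its channel $g$ from one pilot symbol (estimate $(\sqrt{P}g+n_1)/\sqrt{P}$) and then equalizes and detects a data symbol $s_t$ by nearest-symbol decision; $p_d$ is the probability of deciding $\mathcal{S}(d)$ when $\mathcal{S}(0)$ was sent. *)

theory Defs
  imports "HOL-Probability.Probability"
begin

definition psk :: "nat \<Rightarrow> nat \<Rightarrow> complex" where
  "psk D l = exp (\<i> * complex_of_real (pi * (2 * real l + 1) / real D))"

definition psk_set :: "nat \<Rightarrow> complex set" where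
  "psk_set D = psk D ` {0..<D}"

definition psk_detect :: "nat \<Rightarrow> complex \<Rightarrow> complex" where
  "psk_detect D z = (ARG_MIN (\<lambda>s. (cmod (s - z))^2) s. s \<in> psk_set D)"

definition cgauss_density :: "real \<Rightarrow> complex \<Rightarrow> real" where
  "cgauss_density v z = exp (- ((cmod z)^2) / v) / (pi * v)"

definition equalized :: "real \<Rightarrow> complex \<Rightarrow> complex \<Rightarrow> complex \<Rightarrow> complex \<Rightarrow> complex" where
  "equalized P gv sv n1v ntv =
     (complex_of_real (sqrt P) * gv * sv + ntv) / (complex_of_real (sqrt P) * gv + n1v)"

end

theory Submission
  imports Defs
begin

text \<open>
  When \<open>S(l)\<close> is sent, rotating the data noise \<open>n\<^sub>t\<close> by \<open>S(l)/S(0)\<close> preserves the joint law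
  of \<open>(g, n\<^sub>1, n\<^sub>t)\<close> and rotates the equalized sample by the same angle. The nearest-symbol
  detector commutes with this rotation except on ties, which lie on finitely many lines through
  the origin and therefore have probability zero. Hence, given \<open>s\<^sub>t = S(l)\<close>, the decision is
  \<open>S(l + d)\<close> with probability \<open>p\<^sub>d\<close> for every \<open>l\<close>, and \<open>E f(s\<^sub>t \<cdot> cnj \<^bold>s\<^sub>t) = (\<Sum>d<D. p\<^sub>d f(exp(-2\<pi>jd/D)))\<close>
  for every measurable \<open>f\<close>, where \<open>\<^bold>s\<^sub>t\<close> is the decision. Conjugating all three Gaussians
  (and rotating \<open>n\<^sub>t\<close> by \<open>S(0)\<^sup>2\<close>) reflects the constellation, so \<open>p\<^sub>D\<^sub>-\<^sub>d = p\<^sub>d\<close>.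
  Pairing \<open>d\<close> with \<open>D - d\<close> and using \<open>\<Sum>p\<^sub>d = 1\<close> turns \<open>f(z) = 1 - z\<close>, \<open>(1 - z)\<^sup>2\<close> and
  \<open>|1 - z|\<^sup>2\<close> into the three closed forms.
\<close>

lemma (in finite_measure) integral_finite_range:
  fixes X :: "'a \<Rightarrow> 'b::t2_space" and f :: "'b \<Rightarrow> 'c::{banach, second_countable_topology}"
  assumes [measurable]: "X \<in> borel_measurable M" "f \<in> borel_measurable borel"
    and S: "finite S" "AE x in M. X x \<in> S"
  shows "(\<integral>x. f (X x) \<partial>M) = (\<Sum>s\<in>S. measure M {x \<in> space M. X x = s} *\<^sub>R f s)"
proof -
  have [measurable]: "{x \<in> space M. X x = s} \<in> sets M" for s
    using measurable_sets[OF assms(1) borel_closed[OF closed_singleton]]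
    by (simp add: vimage_def Int_def conj_commute)
  have "AE x in M. f (X x) = (\<Sum>s\<in>S. indicator {x \<in> space M. X x = s} x *\<^sub>R f s)"
    using S(2) AE_space by eventually_elim
      (simp add: indicator_def of_bool_def S(1) if_distrib[of "\<lambda>c. c *\<^sub>R _"] sum.delta' cong: if_cong)
  then have "(\<integral>x. f (X x) \<partial>M)
      = (\<integral>x. (\<Sum>s\<in>S. indicator {x \<in> space M. X x = s} x *\<^sub>R f s) \<partial>M)"
    by (intro integral_cong_AE) measurable
  also have "\<dots> = (\<Sum>s\<in>S. measure M {x \<in> space M. X x = s} *\<^sub>R f s)"
    by (subst Bochner_Integration.integral_sum)
      (auto intro!: sum.cong integrable_real_indicator simp: less_top[symmetric])
  finally show ?thesis .
qed

lemma distr_pair_measure3_invariant: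
  assumes [measurable]: "f \<in> M1 \<rightarrow>\<^sub>M M1" "g \<in> M2 \<rightarrow>\<^sub>M M2" "h \<in> M3 \<rightarrow>\<^sub>M M3"
    and f: "distr M1 M1 f = M1" and g: "distr M2 M2 g = M2" and h: "distr M3 M3 h = M3"
    and [simp]: "prob_space M2" "prob_space M3"
  shows "distr (M1 \<Otimes>\<^sub>M (M2 \<Otimes>\<^sub>M M3)) (M1 \<Otimes>\<^sub>M (M2 \<Otimes>\<^sub>M M3)) (\<lambda>(x, y, z). (f x, g y, h z))
    = M1 \<Otimes>\<^sub>M (M2 \<Otimes>\<^sub>M M3)"
proof -
  have "M2 \<Otimes>\<^sub>M M3 = distr (M2 \<Otimes>\<^sub>M M3) (M2 \<Otimes>\<^sub>M M3) (\<lambda>(y, z). (g y, h z))"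
    using pair_measure_distr[of g M2 M2 h M3 M3] by (simp add: g h prob_space_imp_sigma_finite)
  moreover have "prob_space (M2 \<Otimes>\<^sub>M M3)" by (simp add: prob_space_pair)
  ultimately have "M1 \<Otimes>\<^sub>M (M2 \<Otimes>\<^sub>M M3)
      = distr (M1 \<Otimes>\<^sub>M (M2 \<Otimes>\<^sub>M M3)) (M1 \<Otimes>\<^sub>M (M2 \<Otimes>\<^sub>M M3))
          (\<lambda>(x, yz). (f x, (\<lambda>(y, z). (g y, h z)) yz))"
    using pair_measure_distr[of f M1 M1 "\<lambda>(y, z). (g y, h z)" "M2 \<Otimes>\<^sub>M M3" "M2 \<Otimes>\<^sub>M M3"]
    by (simp add: f prob_space_imp_sigma_finite)
  then show ?thesis by (simp add: case_prod_beta')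
qed

lemma (in prob_space) prob_indep_vars_blocks:
  assumes "indep_vars (\<lambda>_. borel) X I" "A \<inter> B = {}" "A \<subseteq> I" "B \<subseteq> I"
    and "Y \<in> PiM A (\<lambda>_. borel) \<rightarrow>\<^sub>M N" "Z \<in> PiM B (\<lambda>_. borel) \<rightarrow>\<^sub>M N'"
    and "S \<in> sets N" "T \<in> sets N'"
  shows "prob {x \<in> space M. Y (restrict (\<lambda>i. X i x) A) \<in> S \<and> Z (restrict (\<lambda>i. X i x) B) \<in> T}
    = prob {x \<in> space M. Y (restrict (\<lambda>i. X i x) A) \<in> S}
      * prob {x \<in> space M. Z (restrict (\<lambda>i. X i x) B) \<in> T}"
  using indep_varD[OF indep_var_restrict[OF assms(1-4)] measurable_sets[OF assms(5,7)] measurable_sets[OF assms(6,8)]]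
  by (simp add: space_PiM vimage_def Int_def conj_commute PiE_iff)

lemma (in prob_space) distr_pair_eq_pair_measure:
  assumes [measurable]: "X \<in> M \<rightarrow>\<^sub>M S" "Y \<in> M \<rightarrow>\<^sub>M T"
    and indep: "\<And>A B. A \<in> sets S \<Longrightarrow> B \<in> sets T \<Longrightarrow>
      prob {x \<in> space M. X x \<in> A \<and> Y x \<in> B} = prob {x \<in> space M. X x \<in> A} * prob {x \<in> space M. Y x \<in> B}"
  shows "distr M (S \<Otimes>\<^sub>M T) (\<lambda>x. (X x, Y x)) = distr M S X \<Otimes>\<^sub>M distr M T Y"
proof (rule pair_measure_eqI[symmetric])
  interpret X: prob_space "distr M S X" by (rule prob_space_distr) simp
  interpret Y: prob_space "distr M T Y" by (rule prob_space_distr) simp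
  show "sigma_finite_measure (distr M S X)" "sigma_finite_measure (distr M T Y)" ..
  fix A B assume "A \<in> sets (distr M S X)" "B \<in> sets (distr M T Y)"
  then have [measurable]: "A \<in> sets S" "B \<in> sets T" by simp_all
  have "emeasure (distr M (S \<Otimes>\<^sub>M T) (\<lambda>x. (X x, Y x))) (A \<times> B)
      = prob {x \<in> space M. X x \<in> A \<and> Y x \<in> B}"
    by (simp add: emeasure_distr emeasure_eq_measure vimage_def Int_def conj_commute)
  also have "\<dots> = prob {x \<in> space M. X x \<in> A} * prob {x \<in> space M. Y x \<in> B}" by (simp add: indep)
  also have "\<dots> = emeasure (distr M S X) A * emeasure (distr M T Y) B"
    by (simp add: emeasure_distr emeasure_eq_measure vimage_def Int_def conj_commute ennreal_mult)
  finally show "emeasure (distr M S X) A * emeasure (distr M T Y) B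
      = emeasure (distr M (S \<Otimes>\<^sub>M T) (\<lambda>x. (X x, Y x))) (A \<times> B)" ..
qed simp

section \<open>Lebesgue measure on the complex plane\<close>

lemma borel_measurable_cnj[measurable]: "cnj \<in> borel_measurable borel"
  by (intro borel_measurable_continuous_onI continuous_on_cnj continuous_on_id)

lemma lborel_complex_eq_distr_pair:
  "(lborel :: complex measure) = distr (lborel \<Otimes>\<^sub>M lborel) borel (\<lambda>(x, y). Complex x y)"
proof (rule lborel_eqI)
  fix l u :: complex assume lu: "\<And>b. b \<in> Basis \<Longrightarrow> l \<bullet> b \<le> u \<bullet> b"
  have le: "Re l \<le> Re u" "Im l \<le> Im u" using lu[of 1] lu[of "\<i>"] by (auto simp: Basis_complex_def)
  have meas: "(\<lambda>(x, y). Complex x y) \<in> (lborel \<Otimes>\<^sub>M lborel) \<rightarrow>\<^sub>M (borel :: complex measure)"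
    unfolding Complex_eq case_prod_beta by measurable
  have "(\<lambda>(x, y). Complex x y) -` box l u \<inter> space (lborel \<Otimes>\<^sub>M lborel)
      = box (Re l) (Re u) \<times> box (Im l) (Im u)"
    by (auto simp: box_def Basis_complex_def space_pair_measure)
  then show "emeasure (distr (lborel \<Otimes>\<^sub>M lborel) borel (\<lambda>(x, y). Complex x y)) (box l u)
      = (\<Prod>b\<in>Basis. (u - l) \<bullet> b)"
    using le by (simp add: emeasure_distr[OF meas] lborel.emeasure_pair_measure_Times
        Basis_complex_def ennreal_mult)
qed simp

lemma lborel_pair_distr_shear:
  fixes f :: "real \<Rightarrow> real"
  assumes [measurable]: "f \<in> borel_measurable borel"
  shows "distr (lborel \<Otimes>\<^sub>M lborel) (lborel \<Otimes>\<^sub>M lborel) (\<lambda>(x, y). (x, y + f x))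
    = lborel \<Otimes>\<^sub>M lborel"
    (is "distr ?L ?L ?S = ?L")
proof (rule measure_eqI)
  fix A assume "A \<in> sets (distr ?L ?L ?S)"
  then have A: "A \<in> sets ?L" by simp
  have S: "?S \<in> ?L \<rightarrow>\<^sub>M ?L" by measurable
  have slice: "Pair x -` (?S -` A \<inter> space ?L) = (+) (f x) -` (Pair x -` A)" for x
    by (auto simp: space_pair_measure add.commute)
  have "emeasure (distr ?L ?L ?S) A = (\<integral>\<^sup>+x. emeasure lborel (Pair x -` (?S -` A \<inter> space ?L)) \<partial>lborel)"
    using measurable_sets[OF S A] by (simp add: emeasure_distr[OF S A] lborel.emeasure_pair_measure_alt)
  also have "\<dots> = (\<integral>\<^sup>+x. emeasure lborel (Pair x -` A) \<partial>lborel)"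
  proof (intro nn_integral_cong)
    fix x :: real
    have "emeasure lborel (Pair x -` A) = emeasure (distr lborel borel ((+) (f x))) (Pair x -` A)"
      by (simp add: lborel_distr_plus)
    also have "\<dots> = emeasure lborel ((+) (f x) -` (Pair x -` A))"
      using sets_Pair1[OF A] by (simp add: emeasure_distr)
    also have "\<dots> = emeasure lborel (Pair x -` (?S -` A \<inter> space ?L))"
      by (simp only: slice)
    finally show "emeasure lborel (Pair x -` (?S -` A \<inter> space ?L)) = emeasure lborel (Pair x -` A)" ..
  qed
  also have "\<dots> = emeasure ?L A"
    using A by (rule lborel.emeasure_pair_measure_alt[symmetric])
  finally show "emeasure (distr ?L ?L ?S) A = emeasure ?L A" .
qed simp

lemma lborel_pair_distr_shear':
  fixes f :: "real \<Rightarrow> real"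
  assumes [measurable]: "f \<in> borel_measurable borel"
  shows "distr (lborel \<Otimes>\<^sub>M lborel) (lborel \<Otimes>\<^sub>M lborel) (\<lambda>(x, y). (x + f y, y))
    = lborel \<Otimes>\<^sub>M lborel"
    (is "distr ?L ?L ?S = ?L")
proof -
  let ?swap = "\<lambda>(x::real, y::real). (y, x)" and ?V = "\<lambda>(x, y). (x, y + f x)"
  have m: "?swap \<in> ?L \<rightarrow>\<^sub>M ?L" "?V \<in> ?L \<rightarrow>\<^sub>M ?L" by measurable
  have swap: "distr ?L ?L ?swap = ?L"
    by (rule lborel_pair.distr_pair_swap[symmetric])
  have S: "?S = ?swap \<circ> (?V \<circ> ?swap)" by auto
  have "distr ?L ?L ?S = distr (distr ?L ?L (?V \<circ> ?swap)) ?L ?swap"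
    unfolding S by (rule distr_distr[symmetric, OF m(1) measurable_comp[OF m(1) m(2)]])
  also have "distr ?L ?L (?V \<circ> ?swap) = distr (distr ?L ?L ?swap) ?L ?V"
    by (rule distr_distr[symmetric, OF m(2) m(1)])
  also have "distr (distr (distr ?L ?L ?swap) ?L ?V) ?L ?swap = ?L"
    by (simp add: swap lborel_pair_distr_shear)
  finally show ?thesis .
qed

text \<open>Three-shear decomposition of a rotation. It needs \<open>s \<noteq> 0\<close>; the two rotations with
  \<open>s = 0\<close> are written as products of two quarter turns below.\<close>

lemma lborel_pair_distr_rotation:
  fixes c s :: real
  assumes cs: "c\<^sup>2 + s\<^sup>2 = 1" and s: "s \<noteq> 0"
  shows "distr (lborel \<Otimes>\<^sub>M lborel) (lborel \<Otimes>\<^sub>M lborel) (\<lambda>(x, y). (c * x - s * y, s * x + c * y))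
    = lborel \<Otimes>\<^sub>M lborel"
    (is "distr ?L ?L ?R = ?L")
proof -
  define a where "a = (c - 1) / s"
  let ?X = "\<lambda>(x::real, y::real). (x + a * y, y)" and ?Y = "\<lambda>(x::real, y::real). (x, y + s * x)"
  have m: "?X \<in> ?L \<rightarrow>\<^sub>M ?L" "?Y \<in> ?L \<rightarrow>\<^sub>M ?L" by measurable
  have c: "c = 1 + a * s" using s by (simp add: a_def field_simps)
  have "2 * a + a * a * s = a * (1 + c)" by (simp add: c algebra_simps)
  also have "\<dots> = (c * c - 1) / s" using s by (simp add: a_def field_simps)
  also have "\<dots> = - s" using cs s by (simp add: field_simps power2_eq_square)
  finally have a: "2 * a + a * a * s = - s" .
  have R: "?R = ?X \<circ> (?Y \<circ> ?X)"
  proof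
    fix p :: "real \<times> real"
    obtain x y where p: "p = (x, y)" by (cases p)
    have "(?X \<circ> (?Y \<circ> ?X)) p = (x * (1 + a * s) + y * (2 * a + a * a * s), s * x + y * (1 + a * s))"
      by (simp add: p algebra_simps)
    also have "\<dots> = ?R p" by (simp only: a c[symmetric]) (simp add: p)
    finally show "?R p = (?X \<circ> (?Y \<circ> ?X)) p" ..
  qed
  have "distr ?L ?L ?R = distr (distr ?L ?L (?Y \<circ> ?X)) ?L ?X"
    unfolding R by (rule distr_distr[symmetric, OF m(1) measurable_comp[OF m(1) m(2)]])
  also have "distr ?L ?L (?Y \<circ> ?X) = distr (distr ?L ?L ?X) ?L ?Y"
    by (rule distr_distr[symmetric, OF m(2) m(1)])
  also have "distr (distr (distr ?L ?L ?X) ?L ?Y) ?L ?X = ?L"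
    by (simp add: lborel_pair_distr_shear lborel_pair_distr_shear')
  finally show ?thesis .
qed

lemma lborel_pair_distr_reflection:
  "distr (lborel \<Otimes>\<^sub>M lborel) (lborel \<Otimes>\<^sub>M lborel) (\<lambda>(x, y). (x, - y))
    = (lborel \<Otimes>\<^sub>M lborel :: (real \<times> real) measure)"
proof -
  have "distr lborel borel (\<lambda>x. x) \<Otimes>\<^sub>M distr lborel borel uminus
      = distr (lborel \<Otimes>\<^sub>M lborel) (borel \<Otimes>\<^sub>M borel) (\<lambda>(x, y). (x, - (y::real)))"
    by (intro pair_measure_distr) (auto simp: lborel_distr_uminus intro: lborel.sigma_finite_measure_axioms)
  also have "\<dots> = distr (lborel \<Otimes>\<^sub>M lborel) (lborel \<Otimes>\<^sub>M lborel) (\<lambda>(x, y). (x, - y))"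
    by (intro distr_cong) auto
  finally show ?thesis
    by (simp add: lborel_distr_uminus distr_id2[of borel lborel, simplified]) (rule sym)
qed

lemma lborel_complex_distr_eqI:
  fixes \<phi> :: "complex \<Rightarrow> complex"
  assumes T: "T \<in> (lborel \<Otimes>\<^sub>M lborel) \<rightarrow>\<^sub>M (lborel \<Otimes>\<^sub>M lborel)"
      "distr (lborel \<Otimes>\<^sub>M lborel) (lborel \<Otimes>\<^sub>M lborel) T = lborel \<Otimes>\<^sub>M lborel"
    and \<phi>: "\<phi> \<in> borel_measurable borel"
    and commute: "\<And>x y. \<phi> (Complex x y) = (case T (x, y) of (a, b) \<Rightarrow> Complex a b)"
  shows "distr lborel borel \<phi> = lborel"
proof -
  let ?L = "lborel \<Otimes>\<^sub>M lborel :: (real \<times> real) measure" and ?C = "\<lambda>(x, y). Complex x y"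
  have C: "?C \<in> ?L \<rightarrow>\<^sub>M borel" unfolding Complex_eq case_prod_beta by measurable
  have "\<phi> \<circ> ?C = ?C \<circ> T" by (auto simp: commute)
  then have "distr (distr ?L borel ?C) borel \<phi> = distr (distr ?L ?L T) borel ?C"
    using C T(1) \<phi> by (simp add: distr_distr)
  then show ?thesis by (simp add: T(2) lborel_complex_eq_distr_pair[symmetric])
qed

lemma lborel_complex_distr_mult:
  fixes u :: complex
  assumes u: "norm u = 1"
  shows "distr lborel borel ((*) u) = lborel"
proof -
  have rotation: "distr lborel borel ((*) v) = lborel" if "norm v = 1" "Im v \<noteq> 0" for v :: complex
  proof (rule lborel_complex_distr_eqI)
    show "distr (lborel \<Otimes>\<^sub>M lborel) (lborel \<Otimes>\<^sub>M lborel)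
        (\<lambda>(x, y). (Re v * x - Im v * y, Im v * x + Re v * y)) = lborel \<Otimes>\<^sub>M lborel"
      using that by (intro lborel_pair_distr_rotation) (simp_all add: norm_complex_def)
  qed (auto simp: complex_eq_iff)
  show ?thesis
  proof (cases "Im u = 0")
    case True
    have "Re u \<noteq> 0" using u True by (auto simp: norm_complex_def)
    then have "distr (distr lborel borel ((*) (- \<i>))) borel ((*) (\<i> * u)) = lborel"
      using u by (simp add: rotation norm_mult)
    moreover have "(*) (\<i> * u) \<circ> (*) (- \<i>) = (*) u" by (auto simp: fun_eq_iff complex_eq_iff)
    ultimately show ?thesis by (simp add: distr_distr)
  qed (simp add: u rotation)
qed

lemma lborel_complex_distr_cnj: "distr lborel borel cnj = lborel"
  by (rule lborel_complex_distr_eqI[OF _ lborel_pair_distr_reflection]) (simp_all add: complex_eq_iff)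

section \<open>The circularly-symmetric complex Gaussian distribution\<close>

lemma borel_measurable_cgauss_density[measurable]: "cgauss_density v \<in> borel_measurable borel"
  unfolding cgauss_density_def by measurable

definition cgauss :: "real \<Rightarrow> complex measure" where
  "cgauss v = density lborel (\<lambda>z. ennreal (cgauss_density v z))"

lemma sets_cgauss[simp, measurable_cong]: "sets (cgauss v) = sets borel"
  by (simp add: cgauss_def)

lemma space_cgauss[simp]: "space (cgauss v) = UNIV"
  by (simp add: cgauss_def)

lemma cgauss_distr_isometry:
  assumes [measurable]: "\<phi> \<in> borel_measurable borel"
    and lborel: "distr lborel borel \<phi> = lborel" and norm: "\<And>z. norm (\<phi> z) = norm z"
  shows "distr (cgauss v) (cgauss v) \<phi> = cgauss v"
proof (rule measure_eqI)
  fix A assume "A \<in> sets (distr (cgauss v) (cgauss v) \<phi>)"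
  then have [measurable]: "A \<in> sets borel" by simp
  have "emeasure (distr (cgauss v) (cgauss v) \<phi>) A = emeasure (cgauss v) (\<phi> -` A)"
    by (simp add: emeasure_distr)
  also have "\<dots> = (\<integral>\<^sup>+z. ennreal (cgauss_density v z) * indicator (\<phi> -` A) z \<partial>lborel)"
    unfolding cgauss_def
    using measurable_sets_borel[of \<phi> borel A] by (intro emeasure_density) simp_all
  also have "\<dots> = (\<integral>\<^sup>+z. ennreal (cgauss_density v (\<phi> z)) * indicator A (\<phi> z) \<partial>lborel)"
    using norm by (intro nn_integral_cong) (simp add: cgauss_density_def indicator_def)
  also have "\<dots> = (\<integral>\<^sup>+w. ennreal (cgauss_density v w) * indicator A w \<partial>distr lborel borel \<phi>)"
    unfolding cgauss_density_def by (rule nn_integral_distr[symmetric]) measurable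
  also have "\<dots> = emeasure (cgauss v) A"
    unfolding lborel cgauss_def by (rule emeasure_density[symmetric]) measurable
  finally show "emeasure (distr (cgauss v) (cgauss v) \<phi>) A = emeasure (cgauss v) A" .
qed simp

lemma cgauss_distr_mult: "norm u = 1 \<Longrightarrow> distr (cgauss v) (cgauss v) ((*) u) = cgauss v"
  by (rule cgauss_distr_isometry) (auto simp: lborel_complex_distr_mult norm_mult)

lemma cgauss_distr_cnj: "distr (cgauss v) (cgauss v) cnj = cgauss v"
  by (rule cgauss_distr_isometry) (auto simp: lborel_complex_distr_cnj)

lemma emeasure_cgauss_null: "N \<in> null_sets lborel \<Longrightarrow> emeasure (cgauss v) N = 0"
  unfolding cgauss_def by (subst emeasure_density) (auto simp: nn_integral_null_set)

lemma emeasure_cgauss_hyperplane: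
  assumes "a \<noteq> 0" shows "emeasure (cgauss v) {z. a \<bullet> z = r} = 0"
proof (rule emeasure_cgauss_null)
  have "negligible {z::complex. a \<bullet> z = r}" using assms by (intro negligible_hyperplane) simp
  moreover have "{z::complex. a \<bullet> z = r} \<in> sets lborel"
    using closed_hyperplane[of a r] by (simp add: borel_closed)
  ultimately show "{z. a \<bullet> z = r} \<in> null_sets lborel"
    by (simp add: negligible_iff_null_sets null_sets_completion_iff)
qed

lemma emeasure_cgauss_singleton: "emeasure (cgauss v) {z} = 0"
  by (intro emeasure_cgauss_null) (simp add: null_sets_def)

lemma distributed_cgauss_eq:
  assumes "distributed M lborel X (\<lambda>z. ennreal (cgauss_density v z))"
  shows "distr M borel X = cgauss v"
proof -
  have "distr M borel X = distr M lborel X" by (rule distr_cong) simp_all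
  also have "\<dots> = cgauss v"
    unfolding cgauss_def by (rule distributed_distr_eq_density[OF assms])
  finally show ?thesis .
qed

lemma inner_complex_Re_cnj: "x \<bullet> y = Re (cnj x * y)"
  by (simp add: inner_complex_def)

lemma emeasure_cgauss_pair_ratio_hyperplane:
  assumes c: "c \<noteq> 0" and [simp]: "prob_space (cgauss w)"
  shows "emeasure (cgauss v \<Otimes>\<^sub>M cgauss w) {(b, z). c \<bullet> ((k + z) / (a + b)) = 0} = 0"
proof -
  interpret W: prob_space "cgauss w" by simp
  let ?X = "{(b, z). c \<bullet> ((k + z) / (a + b)) = 0}"
  have "?X \<in> sets (borel \<Otimes>\<^sub>M borel)"
  proof -
    have "{x \<in> space (borel \<Otimes>\<^sub>M borel). c \<bullet> ((k + snd x) / (a + fst x)) = 0}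
        \<in> sets (borel \<Otimes>\<^sub>M borel)"
      by measurable
    then show ?thesis by (simp add: space_pair_measure case_prod_beta')
  qed
  then have X: "?X \<in> sets (cgauss v \<Otimes>\<^sub>M cgauss w)"
    by (simp cong: sets_pair_measure_cong)
  have slice: "emeasure (cgauss w) (Pair b -` ?X) \<le> indicator {- a} b" for b
  proof (cases "a + b = 0")
    case True
    then show ?thesis using W.emeasure_le_1 by (simp add: eq_neg_iff_add_eq_0 add.commute)
  next
    case False
    define c' where "c' = c / cnj (a + b)"
    have "c \<bullet> ((k + z) / (a + b)) = c' \<bullet> (k + z)" for z
    proof -
      have "cnj c * ((k + z) / (a + b)) = cnj c' * (k + z)" by (simp add: c'_def complex_cnj_divide)
      then show ?thesis by (simp only: inner_complex_Re_cnj)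
    qed
    then have "Pair b -` ?X = {z. c' \<bullet> z = - (c' \<bullet> k)}"
      by (auto simp: inner_add_right)
    moreover have "c' \<noteq> 0" using c False by (simp add: c'_def flip: complex_cnj_add)
    ultimately show ?thesis by (simp add: emeasure_cgauss_hyperplane)
  qed
  have "emeasure (cgauss v \<Otimes>\<^sub>M cgauss w) ?X = (\<integral>\<^sup>+b. emeasure (cgauss w) (Pair b -` ?X) \<partial>cgauss v)"
    using X by (rule W.emeasure_pair_measure_alt)
  also have "\<dots> \<le> (\<integral>\<^sup>+b. indicator {- a} b \<partial>cgauss v)"
    using slice by (rule nn_integral_mono)
  also have "\<dots> = 0" by (simp add: emeasure_cgauss_singleton)
  finally show ?thesis by simp
qed

section \<open>The PSK constellation\<close>

lemma psk_eq_cis: "psk D l = cis (pi * (2 * real l + 1) / real D)"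
  by (simp add: psk_def cis_conv_exp)

lemma norm_psk[simp]: "norm (psk D l) = 1"
  by (simp add: psk_eq_cis)

lemma cis_mult_psk:
  assumes "D > 0"
  shows "cis (2 * pi * real k / real D) * psk D l = psk D (l + k)"
  using assms by (simp add: psk_eq_cis cis_mult field_simps)

lemma psk_mod:
  assumes "D > 0"
  shows "psk D (l mod D) = psk D l"
proof -
  have "psk D l = psk D (l mod D + D * (l div D))" by simp
  also have "\<dots> = cis (2 * pi * real (D * (l div D)) / real D) * psk D (l mod D)"
    by (rule cis_mult_psk[symmetric, OF assms])
  also have "2 * pi * real (D * (l div D)) / real D = 2 * pi * real (l div D)"
    using assms by simp
  finally show ?thesis by simp
qed

lemma inj_on_psk:
  assumes "D > 0"
  shows "inj_on (psk D) {..<D}"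
proof (rule inj_onI)
  let ?\<omega> = "\<lambda>k. cis (2 * pi * real k / real D)"
  fix k m assume km: "k \<in> {..<D}" "m \<in> {..<D}" and eq: "psk D k = psk D m"
  have "?\<omega> k * psk D 0 = ?\<omega> m * psk D 0"
    using eq cis_mult_psk[OF assms, of _ 0] by simp
  moreover have "psk D 0 \<noteq> 0" by (simp add: psk_def)
  ultimately have "?\<omega> k = ?\<omega> m" by simp
  then show "k = m"
    using inj_onD[OF bij_betw_imp_inj_on[OF Complex.bij_betw_roots_unity[OF assms]]] km by blast
qed

lemma finite_psk_set[simp]: "finite (psk_set D)"
  by (simp add: psk_set_def)

lemma psk_set_eq_image: "psk_set D = psk D ` {..<D}"
  by (simp add: psk_set_def atLeast0LessThan)

lemma psk_in_psk_set: "D > 0 \<Longrightarrow> psk D l \<in> psk_set D"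
  unfolding psk_set_def using psk_mod[of D l, symmetric] by auto

lemma norm_psk_set: "s \<in> psk_set D \<Longrightarrow> norm s = 1"
  by (auto simp: psk_set_def)

lemma sum_psk_set:
  "D > 0 \<Longrightarrow> (\<Sum>s\<in>psk_set D. f s) = (\<Sum>l<D. f (psk D l))"
  by (simp add: psk_set_eq_image sum.reindex inj_on_psk)

lemma psk_mult_cnj_psk:
  assumes "D > 0"
  shows "psk D l * cnj (psk D (l + d)) = cis (- (2 * pi * real d / real D))"
  using assms by (simp add: psk_eq_cis cis_cnj cis_mult field_simps)

lemma image_psk_set_equivariant:
  assumes "\<And>l. l < D \<Longrightarrow> \<phi> (psk D l) \<in> psk_set D" and "inj_on \<phi> (psk_set D)"
  shows "\<phi> ` psk_set D = psk_set D"
  using assms by (intro endo_inj_surj) (auto simp: psk_set_eq_image)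

lemma cis_mult_image_psk_set:
  assumes "D > 0"
  shows "(*) (cis (2 * pi * real k / real D)) ` psk_set D = psk_set D"
  using assms by (intro image_psk_set_equivariant) (auto simp: cis_mult_psk psk_in_psk_set inj_on_def)

lemma sum_psk_set_rotate:
  assumes "D > 0"
  shows "(\<Sum>s\<in>psk_set D. f s) = (\<Sum>d<D. f (psk D (l + d)))"
proof -
  let ?u = "cis (2 * pi * real l / real D)"
  have "(\<Sum>s\<in>psk_set D. f s) = (\<Sum>s\<in>(*) ?u ` psk_set D. f s)"
    by (simp only: cis_mult_image_psk_set[OF assms])
  also have "\<dots> = (\<Sum>s\<in>psk_set D. f (?u * s))"
    by (rule sum.reindex_cong[OF _ refl refl]) (auto simp: inj_on_def)
  also have "\<dots> = (\<Sum>d<D. f (psk D (l + d)))"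
    by (simp add: sum_psk_set[OF assms] cis_mult_psk[OF assms] add.commute)
  finally show ?thesis .
qed

definition psk_reflect :: "nat \<Rightarrow> complex \<Rightarrow> complex" where
  "psk_reflect D z = (psk D 0)\<^sup>2 * cnj z"

lemma psk_reflect_psk:
  assumes "D > 0" "l \<le> D"
  shows "psk_reflect D (psk D l) = psk D (D - l)"
proof -
  have "psk_reflect D (psk D l) = cis (pi * (1 - 2 * real l) / real D)"
    by (simp add: psk_reflect_def psk_eq_cis cis_cnj power2_eq_square cis_mult field_simps
        diff_divide_distrib add_divide_distrib)
  also have "\<dots> = cis (pi * (1 - 2 * real l) / real D) * cis (2 * pi)"
    by simp
  also have "\<dots> = psk D (D - l)"
    using assms by (simp add: psk_eq_cis cis_mult of_nat_diff field_simps)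
  finally show ?thesis .
qed

lemma norm_psk_reflect_diff: "norm (psk_reflect D a - psk_reflect D b) = norm (a - b)"
proof -
  have "psk_reflect D a - psk_reflect D b = (psk D 0)\<^sup>2 * cnj (a - b)"
    by (simp add: psk_reflect_def algebra_simps)
  then show ?thesis by (simp only: norm_mult norm_power norm_psk complex_mod_cnj) simp
qed

lemma psk_reflect_image_psk_set:
  assumes "D > 0"
  shows "psk_reflect D ` psk_set D = psk_set D"
proof (rule image_psk_set_equivariant)
  show "psk_reflect D (psk D l) \<in> psk_set D" if "l < D" for l
    using assms that by (simp add: psk_reflect_psk psk_in_psk_set)
  show "inj_on (psk_reflect D) (psk_set D)"
    using norm_psk_reflect_diff[of D] by (intro inj_onI) (metis eq_iff_diff_eq_0 norm_eq_zero)
qed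

section \<open>Nearest-symbol detection\<close>

definition psk_ties :: "nat \<Rightarrow> complex set" where
  "psk_ties D = {z. \<exists>s\<in>psk_set D. \<exists>s'\<in>psk_set D. s \<noteq> s' \<and> norm (s - z) = norm (s' - z)}"

lemma psk_detect_in_psk_set: "D > 0 \<Longrightarrow> psk_detect D z \<in> psk_set D"
  unfolding psk_detect_def arg_min_on_def[symmetric]
  by (rule arg_min_if_finite(1)) (auto simp: psk_set_def)

lemma psk_detect_nearest:
  assumes "D > 0" "s \<in> psk_set D"
  shows "norm (psk_detect D z - z) \<le> norm (s - z)"
proof -
  have "\<not> (norm (s - z))\<^sup>2 < (norm (psk_detect D z - z))\<^sup>2"
    using arg_min_if_finite(2)[of "psk_set D" "\<lambda>s. (norm (s - z))\<^sup>2"] assms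
    unfolding psk_detect_def arg_min_on_def by (auto simp: psk_set_def)
  then show ?thesis by (simp add: power2_le_imp_le)
qed

lemma psk_detect_eqI:
  assumes D: "D > 0" and z: "z \<notin> psk_ties D" and s: "s \<in> psk_set D"
    and nearest: "\<And>y. y \<in> psk_set D \<Longrightarrow> norm (s - z) \<le> norm (y - z)"
  shows "psk_detect D z = s"
proof (rule ccontr)
  assume "psk_detect D z \<noteq> s"
  moreover have "norm (psk_detect D z - z) = norm (s - z)"
    using psk_detect_nearest[OF D s, of z] nearest[OF psk_detect_in_psk_set[OF D, of z]] by simp
  ultimately have "z \<in> psk_ties D"
    using psk_detect_in_psk_set[OF D] s unfolding psk_ties_def by blast
  with z show False by simp
qed

lemma psk_detect_isometry:
  assumes D: "D > 0" and iso: "\<And>a b. norm (\<phi> a - \<phi> b) = norm (a - b)"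
    and img: "\<phi> ` psk_set D = psk_set D" and z: "z \<notin> psk_ties D"
  shows "psk_detect D (\<phi> z) = \<phi> (psk_detect D z)"
proof (rule psk_detect_eqI[OF D])
  show "\<phi> z \<notin> psk_ties D"
  proof
    assume "\<phi> z \<in> psk_ties D"
    then obtain s s' where "s \<in> \<phi> ` psk_set D" "s' \<in> \<phi> ` psk_set D" "s \<noteq> s'"
        "norm (s - \<phi> z) = norm (s' - \<phi> z)"
      unfolding psk_ties_def img by blast
    then obtain t t' where "t \<in> psk_set D" "t' \<in> psk_set D" "t \<noteq> t'" "norm (t - z) = norm (t' - z)"
      by (auto simp: iso) (metis)
    then have "z \<in> psk_ties D" unfolding psk_ties_def by blast
    with z show False by simp
  qed
  show "\<phi> (psk_detect D z) \<in> psk_set D"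
    using psk_detect_in_psk_set[OF D] img by blast
  fix y assume "y \<in> psk_set D"
  with img obtain y0 where "y0 \<in> psk_set D" "y = \<phi> y0" by blast
  then show "norm (\<phi> (psk_detect D z) - \<phi> z) \<le> norm (y - \<phi> z)"
    using psk_detect_nearest[OF D] iso by simp
qed

text \<open>All constellation points lie on the unit circle, so every tie lies on the perpendicular
  bisector of two of them, which is a line through the origin.\<close>

lemma psk_ties_subset_lines:
  "psk_ties D \<subseteq> (\<Union>s\<in>psk_set D. \<Union>s'\<in>psk_set D - {s}. {z. (s - s') \<bullet> z = 0})"
proof
  fix z assume "z \<in> psk_ties D"
  then obtain s s' where ss: "s \<in> psk_set D" "s' \<in> psk_set D" "s \<noteq> s'"
      and eq: "(norm (s - z))\<^sup>2 = (norm (s' - z))\<^sup>2"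
    unfolding psk_ties_def by auto
  have "(norm (s - z))\<^sup>2 = (norm s)\<^sup>2 - 2 * (s \<bullet> z) + (norm z)\<^sup>2" for s
    by (simp add: power2_norm_eq_inner inner_diff_left inner_diff_right inner_commute)
  with eq norm_psk_set ss have "(s - s') \<bullet> z = 0" by (simp add: inner_diff_left)
  with ss show "z \<in> (\<Union>s\<in>psk_set D. \<Union>s'\<in>psk_set D - {s}. {z. (s - s') \<bullet> z = 0})" by blast
qed

text \<open>\<open>ARG_MIN\<close> chooses by \<open>SOME\<close> from the set of nearest constellation points, which
  depends measurably on the input and takes only finitely many values.\<close>

lemma borel_measurable_psk_detect[measurable]: "psk_detect D \<in> borel_measurable borel"
proof -
  define N where "N z = {s \<in> psk_set D. \<forall>y\<in>psk_set D. norm (s - z) \<le> norm (y - z)}" for z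
  have "psk_detect D = (\<lambda>U. SOME s. s \<in> U) \<circ> N"
    by (simp add: fun_eq_iff psk_detect_def arg_min_def is_arg_min_def N_def not_less Ball_def)
  moreover have "N \<in> borel \<rightarrow>\<^sub>M count_space (Pow (psk_set D))"
    unfolding measurable_count_space_eq2[OF finite_Pow_iff[THEN iffD2, OF finite_psk_set]]
  proof (intro conjI ballI)
    show "N \<in> space borel \<rightarrow> Pow (psk_set D)" by (auto simp: N_def)
    fix U assume U: "U \<in> Pow (psk_set D)"
    have "N z = U \<longleftrightarrow> (\<forall>s\<in>psk_set D. s \<in> U \<longleftrightarrow> (\<forall>y\<in>psk_set D. norm (s - z) \<le> norm (y - z)))"
      for z
      using U unfolding N_def by blast
    then have "N -` {U} \<inter> space borel
        = {z \<in> space borel. \<forall>s\<in>psk_set D. s \<in> U \<longleftrightarrow> (\<forall>y\<in>psk_set D. norm (s - z) \<le> norm (y - z))}"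
      by auto
    also have "\<dots> \<in> sets borel" by measurable
    finally show "N -` {U} \<inter> space borel \<in> sets borel" .
  qed
  ultimately show ?thesis by (simp add: measurable_comp)
qed

section \<open>Detection probabilities\<close>

text \<open>\<open>channel\<close> is the joint law of \<open>(g, n\<^sub>1, n\<^sub>t)\<close>, \<open>eq_output s t\<close> the equalized sample
  when \<open>s\<close> is sent over the realisation \<open>t\<close>, and \<open>detect_prob d\<close> the probability \<open>p\<^sub>d\<close>.\<close>

locale psk_link =
  fixes D :: nat and P sg2 N0 :: real
  assumes D_pos: "D > 0"
    and prob_space_gain: "prob_space (cgauss sg2)"
    and prob_space_noise: "prob_space (cgauss N0)"
begin

definition channel :: "(complex \<times> complex \<times> complex) measure" where
  "channel = cgauss sg2 \<Otimes>\<^sub>M (cgauss N0 \<Otimes>\<^sub>M cgauss N0)"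

definition eq_output :: "complex \<Rightarrow> complex \<times> complex \<times> complex \<Rightarrow> complex" where
  "eq_output s = (\<lambda>(g, n1, nt). equalized P g s n1 nt)"

definition detect_prob :: "nat \<Rightarrow> real" where
  "detect_prob d = measure channel {t. psk_detect D (eq_output (psk D 0) t) = psk D d}"

sublocale channel: prob_space channel
  unfolding channel_def by (intro prob_space_pair prob_space_gain prob_space_noise)

lemma sets_channel[measurable_cong]: "sets channel = sets (borel \<Otimes>\<^sub>M (borel \<Otimes>\<^sub>M borel))"
  unfolding channel_def by (intro sets_pair_measure_cong) simp_all

lemma space_channel[simp]: "space channel = UNIV"
  by (simp add: channel_def space_pair_measure)

lemma borel_measurable_eq_output[measurable]:
  "eq_output s \<in> borel_measurable (borel \<Otimes>\<^sub>M (borel \<Otimes>\<^sub>M borel))"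
  unfolding eq_output_def equalized_def by measurable

lemma sets_channel_Collect: "Measurable.pred channel Q \<Longrightarrow> {t. Q t} \<in> sets channel"
  by (simp add: pred_def)

lemma sets_channel_detect[measurable]: "{t. psk_detect D (eq_output s t) = w} \<in> sets channel"
  by (intro sets_channel_Collect) measurable

lemma AE_eq_output_not_tie: "AE t in channel. eq_output s t \<notin> psk_ties D"
proof -
  have "AE t in channel. (s1 - s2) \<bullet> eq_output s t \<noteq> 0" if "s1 \<noteq> s2" for s1 s2
  proof (rule AE_I')
    interpret noise: prob_space "cgauss N0 \<Otimes>\<^sub>M cgauss N0"
      by (intro prob_space_pair prob_space_noise)
    let ?c = "complex_of_real (sqrt P)"
    let ?X = "{(g, n1, nt). (s1 - s2) \<bullet> ((?c * g * s + nt) / (?c * g + n1)) = 0}"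
    have "{t \<in> space channel. (s1 - s2) \<bullet> eq_output s t = 0} \<in> sets channel" by measurable
    moreover have X_eq: "{t \<in> space channel. (s1 - s2) \<bullet> eq_output s t = 0} = ?X"
      by (auto simp: eq_output_def equalized_def)
    ultimately have X: "?X \<in> sets channel" by simp
    have "Pair g -` ?X = {(b, z). (s1 - s2) \<bullet> ((?c * g * s + z) / (?c * g + b)) = 0}" for g
      by auto
    then have "emeasure channel ?X = (\<integral>\<^sup>+g. 0 \<partial>cgauss sg2)"
      using X that prob_space_noise unfolding channel_def
      by (simp add: noise.emeasure_pair_measure_alt emeasure_cgauss_pair_ratio_hyperplane)
    then show "?X \<in> null_sets channel" using X by (intro null_setsI) simp_all
    show "{t \<in> space channel. \<not> (s1 - s2) \<bullet> eq_output s t \<noteq> 0} \<subseteq> ?X"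
      using X_eq by simp
  qed
  then have "AE t in channel. \<forall>s1\<in>psk_set D. \<forall>s2\<in>psk_set D - {s1}. (s1 - s2) \<bullet> eq_output s t \<noteq> 0"
    by (intro AE_finite_allI) auto
  then show ?thesis
    by eventually_elim (use psk_ties_subset_lines[of D] in blast)
qed

lemma measure_detect_symmetry:
  assumes F: "F \<in> channel \<rightarrow>\<^sub>M channel" "distr channel channel F = channel"
    and iso: "\<And>a b. norm (\<phi> a - \<phi> b) = norm (a - b)" and img: "\<phi> ` psk_set D = psk_set D"
    and out: "\<And>t. eq_output s (F t) = \<phi> (eq_output s' t)"
  shows "measure channel {t. psk_detect D (eq_output s t) = \<phi> w}
    = measure channel {t. psk_detect D (eq_output s' t) = w}"
proof -
  have inj: "\<phi> a = \<phi> b \<longleftrightarrow> a = b" for a b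
    using iso[of a b] by auto
  have preimage: "F -` {t. psk_detect D (eq_output s t) = \<phi> w} \<inter> space channel
      = {t. psk_detect D (\<phi> (eq_output s' t)) = \<phi> w}"
    by (auto simp: out)
  have "measure channel {t. psk_detect D (eq_output s t) = \<phi> w}
      = measure channel (F -` {t. psk_detect D (eq_output s t) = \<phi> w} \<inter> space channel)"
    using measure_distr[OF F(1) sets_channel_detect, of s "\<phi> w"] unfolding F(2) .
  also have "\<dots> = measure channel {t. psk_detect D (\<phi> (eq_output s' t)) = \<phi> w}"
    by (simp only: preimage)
  also have "\<dots> = measure channel {t. psk_detect D (eq_output s' t) = w}"
  proof (rule measure_eq_AE)
    show "AE t in channel. t \<in> {t. psk_detect D (\<phi> (eq_output s' t)) = \<phi> w}
        \<longleftrightarrow> t \<in> {t. psk_detect D (eq_output s' t) = w}"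
      using AE_eq_output_not_tie[of s']
      by eventually_elim (simp add: psk_detect_isometry[OF D_pos iso img] inj)
    show "{t. psk_detect D (\<phi> (eq_output s' t)) = \<phi> w} \<in> sets channel"
      using measurable_sets[OF F(1) sets_channel_detect, of s "\<phi> w"] by (simp only: preimage)
  qed simp
  finally show ?thesis .
qed

lemma channel_distr_invariant:
  assumes "distr (cgauss sg2) (cgauss sg2) f = cgauss sg2"
    and "distr (cgauss N0) (cgauss N0) g = cgauss N0" "distr (cgauss N0) (cgauss N0) h = cgauss N0"
    and [measurable]: "f \<in> borel_measurable borel" "g \<in> borel_measurable borel" "h \<in> borel_measurable borel"
  shows "distr channel channel (\<lambda>(x, y, z). (f x, g y, h z)) = channel"
  unfolding channel_def using assms prob_space_noise by (intro distr_pair_measure3_invariant) simp_all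

lemma measure_detect_rotate:
  "measure channel {t. psk_detect D (eq_output (psk D l) t) = psk D (l + d)} = detect_prob d"
proof -
  define u where "u = cis (2 * pi * real l / real D)"
  have u: "norm u = 1" by (simp add: u_def)
  have psk_l: "psk D (l + k) = u * psk D k" for k
    using cis_mult_psk[OF D_pos] by (simp add: u_def add.commute)
  have "measure channel {t. psk_detect D (eq_output (psk D l) t) = (*) u (psk D d)}
      = measure channel {t. psk_detect D (eq_output (psk D 0) t) = psk D d}"
  proof (rule measure_detect_symmetry)
    show "(\<lambda>(g, n1, nt). (g, n1, u * nt)) \<in> channel \<rightarrow>\<^sub>M channel" by measurable
    show "distr channel channel (\<lambda>(g, n1, nt). (g, n1, u * nt)) = channel"
      using channel_distr_invariant[of "\<lambda>x. x" "\<lambda>x. x" "(*) u"] u by (simp add: cgauss_distr_mult)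
    show "(*) u ` psk_set D = psk_set D"
      unfolding u_def by (rule cis_mult_image_psk_set[OF D_pos])
    show "eq_output (psk D l) ((\<lambda>(g, n1, nt). (g, n1, u * nt)) t) = u * eq_output (psk D 0) t" for t
      using psk_l[of 0] by (auto simp: eq_output_def equalized_def algebra_simps split: prod.split)
  qed (simp add: u norm_mult flip: right_diff_distrib)
  then show ?thesis by (simp add: psk_l detect_prob_def)
qed

lemma detect_prob_reflect:
  assumes "d \<le> D"
  shows "detect_prob (D - d) = detect_prob d"
proof -
  define r where "r = (psk D 0)\<^sup>2"
  have r: "norm r = 1" by (simp add: r_def norm_power)
  have cgauss_reflect: "distr (cgauss v) (cgauss v) (\<lambda>z. r * cnj z) = cgauss v" for v
  proof -
    have "distr (cgauss v) (cgauss v) ((*) r \<circ> cnj) = distr (distr (cgauss v) (cgauss v) cnj) (cgauss v) ((*) r)"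
      by (rule distr_distr[symmetric]) measurable
    then show ?thesis by (simp add: comp_def cgauss_distr_cnj cgauss_distr_mult r)
  qed
  have "measure channel {t. psk_detect D (eq_output (psk D 0) t) = psk_reflect D (psk D d)}
      = measure channel {t. psk_detect D (eq_output (psk D 0) t) = psk D d}"
  proof (rule measure_detect_symmetry)
    show "(\<lambda>(g, n1, nt). (cnj g, cnj n1, r * cnj nt)) \<in> channel \<rightarrow>\<^sub>M channel" by measurable
    show "distr channel channel (\<lambda>(g, n1, nt). (cnj g, cnj n1, r * cnj nt)) = channel"
      using channel_distr_invariant[of cnj cnj "\<lambda>z. r * cnj z"] by (simp add: cgauss_distr_cnj cgauss_reflect)
    have "psk D 0 * cnj (psk D 0) = 1"
      using norm_psk[of D 0] by (simp add: complex_norm_square[symmetric])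
    then show "eq_output (psk D 0) ((\<lambda>(g, n1, nt). (cnj g, cnj n1, r * cnj nt)) t)
        = psk_reflect D (eq_output (psk D 0) t)" for t
      by (auto simp: eq_output_def equalized_def psk_reflect_def r_def power2_eq_square
          algebra_simps split: prod.split)
  qed (simp_all add: norm_psk_reflect_diff psk_reflect_image_psk_set D_pos)
  then show ?thesis by (simp add: psk_reflect_psk[OF D_pos assms] detect_prob_def)
qed

lemma sum_detect_prob: "(\<Sum>d<D. detect_prob d) = 1"
proof -
  have "1 = (\<integral>t. 1 \<partial>channel :: real)" using channel.prob_space by simp
  also have "\<dots> = (\<Sum>s\<in>psk_set D. measure channel {t. psk_detect D (eq_output (psk D 0) t) = s})"
    using channel.integral_finite_range[of "\<lambda>t. psk_detect D (eq_output (psk D 0) t)" "\<lambda>_. 1::real" "psk_set D"]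
    by (simp add: psk_detect_in_psk_set[OF D_pos])
  also have "\<dots> = (\<Sum>d<D. detect_prob d)"
    by (simp add: sum_psk_set[OF D_pos] detect_prob_def)
  finally show ?thesis ..
qed

end

section \<open>Sums with symmetric weights\<close>

lemma sum_lessThan_even_fold:
  fixes F :: "nat \<Rightarrow> 'a::comm_monoid_add"
  assumes "even D" "D \<ge> 2"
  shows "(\<Sum>d<D. F d) = F 0 + F (D div 2) + (\<Sum>d=1..D div 2 - 1. F d + F (D - d))"
proof -
  obtain k where k: "D = 2 * k" "k \<ge> 1" using assms by (auto elim!: evenE)
  have split: "{..<D} = ({0} \<union> {1..k - 1}) \<union> ({k} \<union> (\<lambda>d. D - d) ` {1..k - 1})"
  proof (intro set_eqI iffI)
    fix d assume d: "d \<in> {..<D}"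
    show "d \<in> ({0} \<union> {1..k - 1}) \<union> ({k} \<union> (\<lambda>d. D - d) ` {1..k - 1})"
    proof (cases "d \<le> k")
      case False
      then have "d = D - (D - d)" "D - d \<in> {1..k - 1}" using d k by auto
      then show ?thesis by blast
    qed auto
  qed (use k in auto)
  have inj: "inj_on ((-) D) {1..k - 1}" by (rule inj_onI) (use k in auto)
  have "(\<Sum>d<D. F d) = (\<Sum>d\<in>{0} \<union> {1..k - 1}. F d) + (\<Sum>d\<in>{k} \<union> (\<lambda>d. D - d) ` {1..k - 1}. F d)"
    unfolding split by (rule sum.union_disjoint) (use k in auto)
  also have "(\<Sum>d\<in>{0} \<union> {1..k - 1}. F d) = F 0 + (\<Sum>d=1..k - 1. F d)"
    by (subst sum.union_disjoint) auto
  also have "(\<Sum>d\<in>{k} \<union> (\<lambda>d. D - d) ` {1..k - 1}. F d) = F k + (\<Sum>d=1..k - 1. F (D - d))"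
  proof -
    have "k \<notin> (\<lambda>d. D - d) ` {1..k - 1}" using k by auto
    moreover have "(\<Sum>d\<in>(-) D ` {1..k - 1}. F d) = (\<Sum>d=1..k - 1. F (D - d))"
      using sum.reindex[OF inj, of F] by (simp add: comp_def)
    ultimately show ?thesis by simp
  qed
  finally show ?thesis using k by (simp add: sum.distrib algebra_simps)
qed

lemma cis_minus_pi: "cis (- pi) = - 1"
  by (simp add: complex_eq_iff)

context
  fixes D :: nat and p :: "nat \<Rightarrow> real"
  assumes D: "even D" "D \<ge> 2"
    and p_sym: "\<And>d. d \<le> D \<Longrightarrow> p (D - d) = p d"
    and p_sum: "(\<Sum>d<D. p d) = 1"
begin

lemma sum_symmetric_cis:
  fixes F :: "complex \<Rightarrow> 'a::real_vector"
  shows "(\<Sum>d<D. p d *\<^sub>R F (cis (- (2 * pi * d / D))))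
    = p 0 *\<^sub>R F 1 + p (D div 2) *\<^sub>R F (- 1)
      + (\<Sum>d=1..D div 2 - 1. p d *\<^sub>R (F (cis (- (2 * pi * d / D))) + F (cis (2 * pi * d / D))))"
proof -
  let ?G = "\<lambda>d. p d *\<^sub>R F (cis (- (2 * pi * d / D)))"
  have "2 * pi * real (D div 2) / real D = pi" using D by (auto elim!: evenE)
  then have half: "?G (D div 2) = p (D div 2) *\<^sub>R F (- 1)" using cis_minus_pi by simp
  have reflect: "cis (- (2 * pi * real (D - d) / real D)) = cis (2 * pi * real d / real D)" if "d \<le> D" for d
  proof -
    have "- (2 * pi * real (D - d) / real D) = 2 * pi * real d / real D - 2 * pi"
      using D that by (simp add: of_nat_diff field_simps)
    then show ?thesis by (simp add: complex_eq_iff cos_diff sin_diff)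
  qed
  have "(\<Sum>d<D. ?G d) = ?G 0 + ?G (D div 2) + (\<Sum>d=1..D div 2 - 1. ?G d + ?G (D - d))"
    by (rule sum_lessThan_even_fold[OF D])
  also have "(\<Sum>d=1..D div 2 - 1. ?G d + ?G (D - d))
      = (\<Sum>d=1..D div 2 - 1. p d *\<^sub>R (F (cis (- (2 * pi * d / D))) + F (cis (2 * pi * d / D))))"
  proof (intro sum.cong refl)
    fix d assume "d \<in> {1..D div 2 - 1}"
    then have "d \<le> D" by auto
    then show "?G d + ?G (D - d) = p d *\<^sub>R (F (cis (- (2 * pi * d / D))) + F (cis (2 * pi * d / D)))"
      by (simp only: p_sym reflect scaleR_add_right)
  qed
  finally show ?thesis by (simp add: half)
qed

lemma sum_symmetric_weights: "1 = p 0 + p (D div 2) + 2 * (\<Sum>d=1..D div 2 - 1. p d)"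
  using sum_symmetric_cis[of "\<lambda>_. 1 :: real"] by (simp add: p_sum sum_distrib_left mult.commute)

lemma sum_symmetric_cis_mean:
  "(\<Sum>d<D. p d *\<^sub>R (1 - cis (- (2 * pi * d / D))))
    = complex_of_real (1 - p 0 + p (D div 2) - 2 * (\<Sum>d = 1..D div 2 - 1. p d * cos (2 * pi * d / D)))"
proof -
  let ?c = "\<lambda>d::nat. cos (2 * pi * d / D)"
  have "(1 - cis (- x)) + (1 - cis x) = complex_of_real (2 - 2 * cos x)" for x
    by (simp add: complex_eq_iff)
  then have "(\<Sum>d<D. p d *\<^sub>R (1 - cis (- (2 * pi * d / D))))
      = complex_of_real (2 * p (D div 2) + (\<Sum>d = 1..D div 2 - 1. p d * (2 - 2 * ?c d)))"
    using sum_symmetric_cis[of "\<lambda>z. 1 - z"] by (simp add: scaleR_conv_of_real)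
  also have "2 * p (D div 2) + (\<Sum>d = 1..D div 2 - 1. p d * (2 - 2 * ?c d))
      = 2 * p (D div 2) + 2 * (\<Sum>d = 1..D div 2 - 1. p d) - 2 * (\<Sum>d = 1..D div 2 - 1. p d * ?c d)"
    by (simp add: sum_distrib_left sum_subtractf algebra_simps)
  also have "\<dots> = 1 - p 0 + p (D div 2) - 2 * (\<Sum>d = 1..D div 2 - 1. p d * ?c d)"
    using sum_symmetric_weights by simp
  finally show ?thesis .
qed

lemma sum_symmetric_cis_square:
  "(\<Sum>d<D. p d *\<^sub>R (1 - cis (- (2 * pi * d / D)))\<^sup>2)
    = complex_of_real (1 - p 0 + 3 * p (D div 2)
        + 2 * (\<Sum>d = 1..D div 2 - 1. p d * (cos (4 * pi * d / D) - 2 * cos (2 * pi * d / D))))"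
proof -
  let ?c = "\<lambda>d::nat. cos (2 * pi * d / D)" and ?c2 = "\<lambda>d::nat. cos (4 * pi * d / D)"
  have "(1 - cis (- x))\<^sup>2 + (1 - cis x)\<^sup>2 = complex_of_real (2 - 4 * cos x + 2 * cos (2 * x))" for x
    using cos_double[of x] by (simp add: complex_eq_iff power2_eq_square algebra_simps)
  moreover have "2 * (2 * pi * d / D) = 4 * pi * d / D" for d :: nat by simp
  ultimately have "(\<Sum>d<D. p d *\<^sub>R (1 - cis (- (2 * pi * d / D)))\<^sup>2)
      = complex_of_real (4 * p (D div 2) + (\<Sum>d = 1..D div 2 - 1. p d * (2 - 4 * ?c d + 2 * ?c2 d)))"
    using sum_symmetric_cis[of "\<lambda>z. (1 - z)\<^sup>2"] by (simp add: scaleR_conv_of_real mult.assoc)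
  also have "4 * p (D div 2) + (\<Sum>d = 1..D div 2 - 1. p d * (2 - 4 * ?c d + 2 * ?c2 d))
      = 4 * p (D div 2) + 2 * (\<Sum>d = 1..D div 2 - 1. p d) + 2 * (\<Sum>d = 1..D div 2 - 1. p d * (?c2 d - 2 * ?c d))"
    by (simp add: sum_distrib_left sum.distrib sum_subtractf algebra_simps)
  also have "\<dots> = 1 - p 0 + 3 * p (D div 2) + 2 * (\<Sum>d = 1..D div 2 - 1. p d * (?c2 d - 2 * ?c d))"
    using sum_symmetric_weights by simp
  finally show ?thesis .
qed

lemma sum_symmetric_cis_norm_square:
  "(\<Sum>d<D. p d * (norm (1 - cis (- (2 * pi * d / D))))\<^sup>2)
    = 4 * p (D div 2) + 4 * (\<Sum>d = 1..D div 2 - 1. p d * (1 - cos (2 * pi * d / D)))"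
proof -
  have norm_square: "(norm (1 - cis x))\<^sup>2 = 2 - 2 * cos x" for x
    using sin_cos_squared_add[of x] by (simp add: cmod_power2 power2_diff)
  have "(\<Sum>d<D. p d * (norm (1 - cis (- (2 * pi * d / D))))\<^sup>2)
      = p 0 * 0 + p (D div 2) * 4 + (\<Sum>d = 1..D div 2 - 1. p d * ((2 - 2 * cos (2 * pi * d / D)) + (2 - 2 * cos (2 * pi * d / D))))"
    using sum_symmetric_cis[of "\<lambda>z. (norm (1 - z))\<^sup>2"] by (simp only: real_scaleR_def norm_square cos_minus) simp
  then show ?thesis by (simp add: sum_distrib_left algebra_simps)
qed

end

section \<open>The transmission model\<close>

locale psk_transmission =
  fixes M :: "'a measure" and D :: nat and P sg2 N0 :: real and g n1 nt st :: "'a \<Rightarrow> complex"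
  assumes prob_space_M: "prob_space M" and D_pos: "D > 0"
    and g_distr: "distributed M lborel g (\<lambda>z. ennreal (cgauss_density sg2 z))"
    and n1_distr: "distributed M lborel n1 (\<lambda>z. ennreal (cgauss_density N0 z))"
    and nt_distr: "distributed M lborel nt (\<lambda>z. ennreal (cgauss_density N0 z))"
    and st_unif: "\<forall>l<D. measure M {x \<in> space M. st x = psk D l} = 1 / real D"
    and indep: "prob_space.indep_vars M (\<lambda>_. borel) (\<lambda>i. [g, n1, nt, st] ! i) {0..<4}"
begin

sublocale prob_space M by (rule prob_space_M)

lemma random_variables[measurable]:
  "g \<in> borel_measurable M" "n1 \<in> borel_measurable M" "nt \<in> borel_measurable M" "st \<in> borel_measurable M"
  using indep unfolding indep_vars_def by (simp_all add: atLeast0LessThan lessThan_Suc numeral_eq_Suc)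

lemma distr_g: "distr M borel g = cgauss sg2"
  and distr_n1: "distr M borel n1 = cgauss N0"
  and distr_nt: "distr M borel nt = cgauss N0"
  by (simp_all add: distributed_cgauss_eq g_distr n1_distr nt_distr)

sublocale psk_link D P sg2 N0
  using D_pos prob_space_distr[OF random_variables(1)] prob_space_distr[OF random_variables(2)]
  by (intro psk_link.intro) (simp_all add: distr_g distr_n1)

lemma prob_symbol_channel:
  assumes "S \<in> sets borel" "B \<in> sets (borel \<Otimes>\<^sub>M (borel \<Otimes>\<^sub>M borel))"
  shows "prob {x \<in> space M. st x \<in> S \<and> (g x, n1 x, nt x) \<in> B}
    = prob {x \<in> space M. st x \<in> S} * prob {x \<in> space M. (g x, n1 x, nt x) \<in> B}"
proof -
  have m1: "(\<lambda>f. f 3) \<in> PiM {3} (\<lambda>_. borel) \<rightarrow>\<^sub>M (borel :: complex measure)"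
    by (rule measurable_component_singleton) simp
  have m2: "(\<lambda>f. (f 0, f 1, f 2))
      \<in> PiM {0, 1, 2} (\<lambda>_. borel) \<rightarrow>\<^sub>M (borel \<Otimes>\<^sub>M (borel \<Otimes>\<^sub>M (borel :: complex measure)))"
    by measurable
  show ?thesis
    using prob_indep_vars_blocks[OF indep _ _ _ m1 m2 assms] by simp
qed

lemma prob_gain_noise:
  assumes "A \<in> sets borel" "B \<in> sets (borel \<Otimes>\<^sub>M borel)"
  shows "prob {x \<in> space M. g x \<in> A \<and> (n1 x, nt x) \<in> B}
    = prob {x \<in> space M. g x \<in> A} * prob {x \<in> space M. (n1 x, nt x) \<in> B}"
proof -
  have m1: "(\<lambda>f. f 0) \<in> PiM {0} (\<lambda>_. borel) \<rightarrow>\<^sub>M (borel :: complex measure)"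
    by (rule measurable_component_singleton) simp
  have m2: "(\<lambda>f. (f 1, f 2)) \<in> PiM {1, 2} (\<lambda>_. borel) \<rightarrow>\<^sub>M (borel \<Otimes>\<^sub>M (borel :: complex measure))"
    by measurable
  show ?thesis
    using prob_indep_vars_blocks[OF indep _ _ _ m1 m2 assms] by simp
qed

lemma indep_noises: "indep_var borel n1 borel nt"
proof -
  have m: "(\<lambda>f. f i) \<in> PiM {i} (\<lambda>_. borel) \<rightarrow>\<^sub>M (borel :: complex measure)" for i :: nat
    by (rule measurable_component_singleton) simp
  show ?thesis
    using indep_var_compose[OF indep_var_restrict[OF indep, of "{1}" "{2}"] m m] by (simp add: comp_def)
qed

lemma distr_channel: "distr M (borel \<Otimes>\<^sub>M (borel \<Otimes>\<^sub>M borel)) (\<lambda>x. (g x, n1 x, nt x)) = channel"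
proof -
  have "distr M (borel \<Otimes>\<^sub>M borel) (\<lambda>x. (n1 x, nt x)) = cgauss N0 \<Otimes>\<^sub>M cgauss N0"
    using indep_noises by (simp add: indep_var_distribution_eq distr_n1 distr_nt)
  then show ?thesis
    using distr_pair_eq_pair_measure[of g borel "\<lambda>x. (n1 x, nt x)" "borel \<Otimes>\<^sub>M borel"]
    by (simp add: prob_gain_noise channel_def distr_g)
qed

definition detected :: "'a \<Rightarrow> complex" where
  "detected x = psk_detect D (equalized P (g x) (st x) (n1 x) (nt x))"

lemma borel_measurable_detected[measurable]: "detected \<in> borel_measurable M"
  unfolding detected_def equalized_def by measurable

lemma prob_symbol_detected:
  assumes "l < D"
  shows "prob {x \<in> space M. st x = psk D l \<and> detected x = psk D (l + d)} = detect_prob d / D"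
proof -
  let ?B = "{t. psk_detect D (eq_output (psk D l) t) = psk D (l + d)}"
  have B: "?B \<in> sets (borel \<Otimes>\<^sub>M (borel \<Otimes>\<^sub>M borel))"
    using sets_channel_detect by (simp add: sets_channel)
  have "{x \<in> space M. st x = psk D l \<and> detected x = psk D (l + d)}
      = {x \<in> space M. st x \<in> {psk D l} \<and> (g x, n1 x, nt x) \<in> ?B}"
    by (auto simp: detected_def eq_output_def)
  moreover have "prob {x \<in> space M. (g x, n1 x, nt x) \<in> ?B} = measure channel ?B"
    using measure_distr[of "\<lambda>x. (g x, n1 x, nt x)" M _ ?B, OF _ B]
    by (simp add: distr_channel vimage_def Int_def conj_commute)
  ultimately show ?thesis
    using prob_symbol_channel[OF borel_closed[OF closed_singleton] B, of "psk D l"] st_unif assms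
    by (simp add: measure_detect_rotate)
qed

lemma cond_prob_detected:
  "cond_prob M (\<lambda>x. detected x = psk D d) (\<lambda>x. st x = psk D 0) = detect_prob d"
  using prob_symbol_detected[of 0 d] st_unif D_pos by (simp add: cond_prob_def conj_commute)

lemma AE_symbol_in_psk_set: "AE x in M. st x \<in> psk_set D"
proof -
  have "{x \<in> space M. st x \<in> psk_set D} = (\<Union>l<D. {x \<in> space M. st x = psk D l})"
    by (auto simp: psk_set_eq_image)
  moreover have "disjoint_family_on (\<lambda>l. {x \<in> space M. st x = psk D l}) {..<D}"
    using inj_on_psk[OF D_pos] by (auto simp: disjoint_family_on_def inj_on_def)
  moreover have "{x \<in> space M. st x = psk D l} \<in> events" for l by measurable
  ultimately have "prob {x \<in> space M. st x \<in> psk_set D} = (\<Sum>l<D. prob {x \<in> space M. st x = psk D l})"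
    by (simp add: finite_measure_finite_Union image_subset_iff)
  also have "\<dots> = 1" using st_unif D_pos by simp
  finally have "AE x in M. x \<in> {x \<in> space M. st x \<in> psk_set D}" by (rule AE_prob_1)
  then show ?thesis by eventually_elim simp
qed

lemma expectation_detected:
  fixes f :: "complex \<Rightarrow> 'b::{banach, second_countable_topology}"
  assumes [measurable]: "f \<in> borel_measurable borel"
  shows "(\<integral>x. f (st x * cnj (detected x)) \<partial>M) = (\<Sum>d<D. detect_prob d *\<^sub>R f (cis (- (2 * pi * d / D))))"
proof -
  have "(\<lambda>z :: complex \<times> complex. fst z * cnj (snd z)) \<in> borel_measurable borel"
    by (intro borel_measurable_continuous_onI continuous_intros)
  then have [measurable]: "(\<lambda>z. f (fst z * cnj (snd z))) \<in> borel_measurable borel"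
    using assms by (rule measurable_compose)
  have "AE x in M. (st x, detected x) \<in> psk_set D \<times> psk_set D"
    using AE_symbol_in_psk_set by eventually_elim (simp add: detected_def psk_detect_in_psk_set[OF D_pos])
  then have "(\<integral>x. f (st x * cnj (detected x)) \<partial>M)
      = (\<Sum>(s, w)\<in>psk_set D \<times> psk_set D. prob {x \<in> space M. st x = s \<and> detected x = w} *\<^sub>R f (s * cnj w))"
    using integral_finite_range[of "\<lambda>x. (st x, detected x)" "\<lambda>(s, w). f (s * cnj w)" "psk_set D \<times> psk_set D"]
    by (simp add: case_prod_beta' prod_eq_iff)
  also have "\<dots> = (\<Sum>l<D. \<Sum>w\<in>psk_set D. prob {x \<in> space M. st x = psk D l \<and> detected x = w}
      *\<^sub>R f (psk D l * cnj w))"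
    unfolding sum.cartesian_product[symmetric] by (rule sum_psk_set[OF D_pos])
  also have "\<dots> = (\<Sum>l<D. \<Sum>d<D. prob {x \<in> space M. st x = psk D l \<and> detected x = psk D (l + d)}
      *\<^sub>R f (psk D l * cnj (psk D (l + d))))"
    by (intro sum.cong refl sum_psk_set_rotate[OF D_pos])
  also have "\<dots> = (\<Sum>l<D. \<Sum>d<D. (detect_prob d / D) *\<^sub>R f (cis (- (2 * pi * d / D))))"
    by (simp add: prob_symbol_detected psk_mult_cnj_psk[OF D_pos])
  also have "\<dots> = (\<Sum>d<D. detect_prob d *\<^sub>R f (cis (- (2 * pi * d / D))))"
    using D_pos by (simp add: sum_constant_scaleR scaleR_sum_right)
  finally show ?thesis .
qed

end

theorem lemma1:
  fixes M :: "'a measure"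
    and D :: nat
    and P sg2 N0 :: real
    and g n1 nt st :: "'a \<Rightarrow> complex"
  assumes M: "prob_space M"
    and D_even: "even D" and D_ge: "D \<ge> 2"
    and P_pos: "P > 0" and sg2_pos: "sg2 > 0" and N0_pos: "N0 > 0"
    and g_distr: "distributed M lborel g (\<lambda>z. ennreal (cgauss_density sg2 z))"
    and n1_distr: "distributed M lborel n1 (\<lambda>z. ennreal (cgauss_density N0 z))"
    and nt_distr: "distributed M lborel nt (\<lambda>z. ennreal (cgauss_density N0 z))"
    and st_unif: "\<forall>l<D. measure M {x \<in> space M. st x = psk D l} = 1 / real D"
    and indep: "prob_space.indep_vars M (\<lambda>_. borel) (\<lambda>i. [g, n1, nt, st] ! i) {0..<4}"
  defines "p \<equiv> (\<lambda>d. cond_prob M (\<lambda>x. psk_detect D (equalized P (g x) (st x) (n1 x) (nt x)) = psk D d)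
                              (\<lambda>x. st x = psk D 0))"
    and "xi \<equiv> (\<lambda>x. 1 - st x * cnj (psk_detect D (equalized P (g x) (st x) (n1 x) (nt x))))"
  shows "(integral\<^sup>L M xi
           = complex_of_real (1 - p 0 + p (D div 2)
               - 2 * (\<Sum>d = 1..D div 2 - 1. p d * cos (2 * pi * real d / real D))))
         \<and> (integral\<^sup>L M (\<lambda>x. (xi x)^2)
           = complex_of_real (1 - p 0 + 3 * p (D div 2)
               + 2 * (\<Sum>d = 1..D div 2 - 1. p d * (cos (4 * pi * real d / real D)
                                                - 2 * cos (2 * pi * real d / real D)))))
         \<and> (integral\<^sup>L M (\<lambda>x. (cmod (xi x))^2)
           = 4 * p (D div 2)
               + 4 * (\<Sum>d = 1..D div 2 - 1. p d * (1 - cos (2 * pi * real d / real D))))"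
proof -
  interpret psk_transmission M D P sg2 N0 g n1 nt st
    using M D_ge g_distr n1_distr nt_distr st_unif indep by (intro psk_transmission.intro) simp_all
  have p: "p = detect_prob"
    using cond_prob_detected by (simp add: p_def detected_def fun_eq_iff)
  have xi: "xi = (\<lambda>x. 1 - st x * cnj (detected x))"
    by (simp add: xi_def detected_def fun_eq_iff)
  show ?thesis
    unfolding p xi
    using expectation_detected[of "\<lambda>z. 1 - z"] expectation_detected[of "\<lambda>z. (1 - z)\<^sup>2"]
      expectation_detected[of "\<lambda>z. (norm (1 - z))\<^sup>2"]
      sum_symmetric_cis_mean[OF D_even D_ge detect_prob_reflect sum_detect_prob]
      sum_symmetric_cis_square[OF D_even D_ge detect_prob_reflect sum_detect_prob]
      sum_symmetric_cis_norm_square[OF D_even D_ge detect_prob_reflect sum_detect_prob]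
    by simp
qed

end
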